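(* Let $m$ be a positive integer, $r$ an odd prime, and $p\ge 3$ a prime which is a primitive root modulo $r^m$. Let $q=p^{\phi(r^m)}$ and $f(x)=\mathrm{Tr}_{q/p}\big(x^{(q-1)/r^m}\big)$ for $x\in\mathbb{F}_q$. Then: (i) the partition $\{D^*_{f,i}\}_{i\in f(\mathbb{F}_q^* )}$ induces a $2$-class association scheme if and only if $|f(\mathbb{F}_q^* )|=2$, and this holds if and only if $m=1$ or $r\equiv 1\pmod p$; (ii) the partition $\{D^*_{f,i}\}_{i\in f(\mathbb{F}_q^* )}$ induces a $3$-class association scheme if and only if $|f(\mathbb{F}_q^* )|=3$, and this holds if and only if $m>1$ and $r\not\equiv 1\pmod p$.
   Context: $\phi$ is Euler's function and $\mathrm{Tr}_{q/p}$ the trace from $\mathbb{F}_q$ to $\mathbb{F}_p$. For $i\in\mathbb{F}_p$, $D_{f,i}=\{x\in\mathbb{F}_q:f(x)=i\}$, $D^*_{f,i}=D_{f,i}\setminus\{0\}$, $f(\mathbb{F}_q^* )=\{f(x):x\ne0\}$. Relations on $\mathbb{F}_q$: the diagonal $R_{-1}$, and for $i\in f(\mathbb{F}_q^* )$, $(\alpha,\beta)\in R_i$ iff $\alpha-\beta\in D^*_{f,i}$. The partition induces a $d$-class association scheme if these relations form a symmetric association scheme on $\mathbb{F}_q$ (each relation symmetric, and for any three relations $R_a,R_b,R_c$ the number $|\{w:(u,w)\in R_a,(w,v)\in R_b\}|$ is constant over $(u,v)\in R_c$) and $d=|f(\mathbb{F}_q^* )|$. *)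

theory Defs
  imports "HOL-Number_Theory.Number_Theory"
begin

text \<open>Trace from F_q to F_p, where q = p^n: Tr(y) = sum_{j<n} y^(p^j).
  Its values lie in the prime subfield, viewed inside the field itself.\<close>
definition field_trace :: "nat \<Rightarrow> nat \<Rightarrow> 'a::field \<Rightarrow> 'a" where
  "field_trace p n y = (\<Sum>j<n. y ^ (p ^ j))"

text \<open>Relations induced by the partition {D*_{f,i}}: None is the diagonal R_{-1},
  Some i is R_i = {(a,b). a - b \<in> D*_{f,i}}.\<close>
definition part_rel :: "('a::ab_group_add \<Rightarrow> 'b) \<Rightarrow> 'b option \<Rightarrow> ('a \<times> 'a) set" where
  "part_rel f c = (case c of None \<Rightarrow> Id
                    | Some i \<Rightarrow> {(a, b). a - b \<noteq> 0 \<and> f (a - b) = i})"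

definition part_index :: "('a::ab_group_add \<Rightarrow> 'b) \<Rightarrow> 'b option set" where
  "part_index f = insert None (Some ` (f ` (UNIV - {0})))"

definition induces_assoc_scheme :: "('a::ab_group_add \<Rightarrow> 'b) \<Rightarrow> nat \<Rightarrow> bool" where
  "induces_assoc_scheme f d \<longleftrightarrow>
     (\<forall>a\<in>part_index f. sym (part_rel f a)) \<and>
     (\<forall>a\<in>part_index f. \<forall>b\<in>part_index f. \<forall>c\<in>part_index f. \<exists>k::nat.
        \<forall>u v. (u, v) \<in> part_rel f c \<longrightarrow>
          card {w. (u, w) \<in> part_rel f a \<and> (w, v) \<in> part_rel f b} = k) \<and>
     d = card (f ` (UNIV - {0}))"

end

(*
  Write q = Q^2 with Q = p^(phi(r^m)/2). As p has order phi(r^m) modulo r^m, p^(phi(r^m)/2) is a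
  square root of 1 other than 1, i.e. -1 (mod r^m); so r^m divides Q + 1 and the exponent
  (q - 1)/r^m is a multiple of Q - 1. Hence f is constant on the punctured lines through 0 of
  F_q regarded as a plane over F_Q.

  Any partition of F_q^* into unions of such lines gives a translation association scheme: a
  decomposition u = (u - w) + w with summands in prescribed classes, off the line of u and
  together with two rescalings from F_Q^*, is the same as a pair of non-collinear representatives
  of the two classes off the line of u, and their number depends only on the class of u. So the
  partition induces a d-class scheme exactly when f takes d values on F_q^*.

  These values are traces of r^m-th roots of unity z. Since p generates (Z/r^m)^*, Tr z is the
  Ramanujan sum, which is phi(r^m) at z = 1, -r^(m-1) at the other r-th roots of unity, and 0 at
  the remaining ones (present only for m > 1). In characteristic p the three are distinct, except
  that phi(r^m) = 0 exactly when r = 1 (mod p).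
*)

theory Submission
  imports Defs "HOL-Computational_Algebra.Polynomial"
begin

section \<open>Roots of unity in finite fields\<close>

lemma prime_CHAR_finite_field: "prime CHAR('a::{field,finite})"
  by (intro prime_CHAR_semidom finite_imp_CHAR_pos) simp

lemma CHAR_eq_if_card_UNIV_eq_prime_power:
  assumes "prime p" "card (UNIV :: 'a::{field,finite} set) = p ^ k"
  shows "CHAR('a) = p"
proof -
  have "CHAR('a) dvd p ^ k"
    using CHAR_dvd_CARD[where 'a = 'a] assms(2) by simp
  then show ?thesis
    using prime_CHAR_finite_field[where 'a = 'a] assms(1) by (metis prime_dvd_power_nat primes_dvd_imp_eq)
qed

lemma power_card_UNIV_minus_one:
  fixes x :: "'a::{field,finite}"
  assumes "x \<noteq> 0"
  shows "x ^ (card (UNIV :: 'a set) - 1) = 1"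
proof -
  let ?U = "UNIV - {0::'a}"
  have "x ^ card ?U * \<Prod>?U = (\<Prod>y\<in>?U. x * y)"
    by (simp add: prod.distrib)
  also have "\<dots> = \<Prod>?U"
    by (rule prod.reindex_bij_witness[of _ "\<lambda>y. y / x" "\<lambda>y. x * y"]) (use assms in auto)
  finally have "x ^ card ?U = 1"
    by simp
  then show ?thesis
    by (simp add: card_Diff_subset)
qed

lemma card_power_eq_le:
  assumes "d > 0"
  shows "card {x::'a::idom. x ^ d = y} \<le> d"
proof -
  let ?P = "monom (1::'a) d + [:-y:]"
  have "degree ?P = d"
    using assms by (subst degree_add_eq_left) (auto simp: degree_monom_eq)
  moreover have "{x. poly ?P x = 0} = {x. x ^ d = y}"
    by (simp add: poly_monom)
  ultimately show ?thesis
    using card_poly_roots_bound[of ?P] assms by fastforce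
qed

lemma card_le_card_image_mult:
  assumes "finite A" "\<And>y. y \<in> h ` A \<Longrightarrow> card {x\<in>A. h x = y} \<le> k"
  shows "card A \<le> card (h ` A) * k"
proof -
  have "card A = card (\<Union>y\<in>h ` A. {x\<in>A. h x = y})"
    by (rule arg_cong[where f = card]) auto
  also have "\<dots> \<le> (\<Sum>y\<in>h ` A. card {x\<in>A. h x = y})"
    using assms(1) by (intro card_UN_le) simp
  also have "\<dots> \<le> card (h ` A) * k"
    using sum_bounded_above[of "h ` A" _ k] assms(2) by simp
  finally show ?thesis .
qed

text \<open>The power map has fibres of size at most \<open>(q - 1)/d\<close>, so its image has at least
  \<open>d\<close> elements.\<close>
lemma
  fixes d :: nat
  defines "q \<equiv> card (UNIV :: 'a::{field,finite} set)"
  assumes "d > 0" "d dvd q - 1"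
  shows power_image_eq_roots_of_unity: "(\<lambda>x::'a. x ^ ((q - 1) div d)) ` (UNIV - {0}) = {z. z ^ d = 1}"
    and card_roots_of_unity: "card {z::'a. z ^ d = 1} = d"
proof -
  define e where "e = (q - 1) div d"
  have "card {0::'a, 1} \<le> q"
    unfolding q_def by (rule card_mono) auto
  moreover have qe: "q - 1 = d * e"
    using assms(3) by (simp add: e_def)
  ultimately have "e > 0"
    by (cases e) auto
  let ?h = "\<lambda>x::'a. x ^ e" and ?U = "UNIV - {0::'a}"
  have image_sub: "?h ` ?U \<subseteq> {z. z ^ d = 1}"
  proof
    fix y assume "y \<in> ?h ` ?U"
    then obtain x where "x \<noteq> 0" "y = x ^ e"
      by auto
    moreover have "(x ^ e) ^ d = x ^ (q - 1)"
      unfolding qe by (metis mult.commute power_mult)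
    ultimately show "y \<in> {z. z ^ d = 1}"
      using power_card_UNIV_minus_one by (simp add: q_def)
  qed
  have "card {x\<in>?U. ?h x = y} \<le> e" for y
  proof -
    have "card {x\<in>?U. ?h x = y} \<le> card {x::'a. x ^ e = y}"
      by (intro card_mono) auto
    also have "\<dots> \<le> e"
      using \<open>e > 0\<close> by (rule card_power_eq_le)
    finally show ?thesis .
  qed
  then have "card ?U \<le> card (?h ` ?U) * e"
    by (intro card_le_card_image_mult) auto
  moreover have "card ?U = d * e"
    using qe by (simp add: q_def card_Diff_subset)
  ultimately have "d \<le> card (?h ` ?U)"
    using \<open>e > 0\<close> by simp
  moreover have "card (?h ` ?U) \<le> card {z::'a. z ^ d = 1}"
    using image_sub by (intro card_mono) auto
  moreover have "card {z::'a. z ^ d = 1} \<le> d"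
    using card_power_eq_le assms(2) by blast
  ultimately have "card {z::'a. z ^ d = 1} = d" "card (?h ` ?U) = card {z::'a. z ^ d = 1}"
    by linarith+
  then show "card {z::'a. z ^ d = 1} = d" "?h ` ?U = {z. z ^ d = 1}"
    using card_subset_eq[OF _ image_sub] by auto
qed

section \<open>Primitive roots modulo odd prime powers\<close>

lemma odd_prime_gt_2: "prime (r::nat) \<Longrightarrow> odd r \<Longrightarrow> r > 2"
  using prime_ge_2_nat[of r] by (cases "r = 2") auto

lemma odd_prime_power_gt_2:
  assumes "prime (r::nat)" "odd r" "m > 0"
  shows "r ^ m > 2"
proof -
  have "r > 2"
    using assms(1,2) by (rule odd_prime_gt_2)
  moreover have "r \<le> r ^ m"
    using \<open>r > 2\<close> assms(3) by (simp add: self_le_power)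
  ultimately show ?thesis
    by linarith
qed

lemma prime_power_dvd_pred_or_succ:
  fixes r x :: nat
  assumes "prime r" "odd r" "r ^ m dvd (x - 1) * (x + 1)"
  shows "r ^ m dvd x - 1 \<or> r ^ m dvd x + 1"
proof -
  have "\<not> r dvd x - 1 \<or> \<not> r dvd x + 1"
  proof (rule ccontr)
    assume "\<not> ?thesis"
    then have "r dvd (x + 1) - (x - 1)"
      using dvd_diff_nat by blast
    moreover have "(x + 1) - (x - 1) \<in> {1, 2}"
      by auto
    moreover have "r > 2"
      using assms(1,2) by (rule odd_prime_gt_2)
    ultimately show False
      by (auto dest: dvd_imp_le)
  qed
  then show ?thesis
    using assms(1,3) prime_imp_power_coprime[OF assms(1)]
    by (metis coprime_commute coprime_dvd_mult_left_iff coprime_dvd_mult_right_iff)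
qed

text \<open>Since \<open>p\<close> has even order \<open>2s\<close> modulo \<open>r\<^sup>m\<close>, \<open>p\<^sup>s\<close> is a square root of
  unity other than \<open>1\<close>, hence \<open>-1\<close>.\<close>
lemma primroot_prime_power_half_totient:
  assumes "prime r" "odd r" "m > 0" "residue_primroot (r ^ m) p"
  shows "r ^ m dvd p ^ (totient (r ^ m) div 2) + 1"
proof -
  define s where "s = totient (r ^ m) div 2"
  have "r ^ m > 2"
    using assms(1-3) by (rule odd_prime_power_gt_2)
  then have ord: "ord (r ^ m) p = 2 * s" and "s > 0"
    using assms(4) totient_even[of "r ^ m"] totient_gt_1[of "r ^ m"]
    by (auto simp: s_def residue_primroot_def)
  have "[(p ^ s) ^ 2 = 1] (mod r ^ m)"
    using ord_works[of p "r ^ m"] ord by (simp add: power_mult[symmetric] mult.commute)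
  moreover have "(p ^ s) ^ 2 - 1 = (p ^ s - 1) * (p ^ s + 1)"
    by (cases "p ^ s") (simp_all add: power2_eq_square algebra_simps)
  moreover have "p \<noteq> 0"
  proof
    assume "p = 0"
    then show False
      using assms(4) \<open>r ^ m > 2\<close> by auto
  qed
  ultimately have "r ^ m dvd (p ^ s - 1) * (p ^ s + 1)"
    by (simp add: cong_altdef_nat)
  moreover have "\<not> r ^ m dvd p ^ s - 1"
  proof
    assume "r ^ m dvd p ^ s - 1"
    then have "[p ^ s = 1] (mod r ^ m)"
      using \<open>p \<noteq> 0\<close> by (simp add: cong_altdef_nat)
    then have "ord (r ^ m) p dvd s"
      by (simp add: ord_divides')
    then show False
      using ord \<open>s > 0\<close> by (auto dest: dvd_imp_le)
  qed
  ultimately show ?thesis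
    using prime_power_dvd_pred_or_succ[OF assms(1,2)] by (auto simp: s_def)
qed

section \<open>Translation schemes\<close>

definition summands :: "('a::ab_group_add \<Rightarrow> 'b) \<Rightarrow> 'b \<Rightarrow> 'b \<Rightarrow> 'a \<Rightarrow> 'a set" where
  "summands g a b u = {w. w \<noteq> 0 \<and> u - w \<noteq> 0 \<and> g (u - w) = a \<and> g w = b}"

lemma part_rel_unique:
  assumes "(u, v) \<in> part_rel g c"
  shows "(u, v) \<in> part_rel g b \<longleftrightarrow> b = c"
  using assms unfolding part_rel_def by (cases b; cases c) auto

lemma card_part_rel_paths_None:
  assumes "(u, v) \<in> part_rel g c"
  shows "card {w. (u, w) \<in> part_rel g None \<and> (w, v) \<in> part_rel g b} = (if b = c then 1 else 0)"
    and "card {w. (u, w) \<in> part_rel g a \<and> (w, v) \<in> part_rel g None} = (if a = c then 1 else 0)"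
proof -
  have "{w. (u, w) \<in> part_rel g None \<and> (w, v) \<in> part_rel g b} = (if b = c then {u} else {})"
    "{w. (u, w) \<in> part_rel g a \<and> (w, v) \<in> part_rel g None} = (if a = c then {v} else {})"
    using part_rel_unique[OF assms] by (auto simp: part_rel_def)
  then show "card {w. (u, w) \<in> part_rel g None \<and> (w, v) \<in> part_rel g b} = (if b = c then 1 else 0)"
    "card {w. (u, w) \<in> part_rel g a \<and> (w, v) \<in> part_rel g None} = (if a = c then 1 else 0)"
    by simp_all
qed

lemma card_part_rel_paths_Some:
  "card {w. (u, w) \<in> part_rel g (Some a) \<and> (w, v) \<in> part_rel g (Some b)} = card (summands g a b (u - v))"
proof -
  have "{w. (u, w) \<in> part_rel g (Some a) \<and> (w, v) \<in> part_rel g (Some b)} = (\<lambda>w. w + v) ` summands g a b (u - v)"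
    unfolding part_rel_def summands_def by (force simp: algebra_simps)
  then show ?thesis
    by (simp add: card_image)
qed

lemma induces_assoc_scheme_if_card_summands_invariant:
  fixes g :: "'a::ab_group_add \<Rightarrow> 'b"
  assumes uminus: "\<And>x. g (- x) = g x"
    and card_summands: "\<And>a b u v. u \<noteq> 0 \<Longrightarrow> v \<noteq> 0 \<Longrightarrow> g u = g v \<Longrightarrow>
                          card (summands g a b u) = card (summands g a b v)"
  shows "induces_assoc_scheme g d \<longleftrightarrow> d = card (g ` (UNIV - {0}))"
proof -
  let ?paths = "\<lambda>a b u v. card {w. (u, w) \<in> part_rel g a \<and> (w, v) \<in> part_rel g b}"
  have "?paths a b u v = ?paths a b u' v'"
    if uv: "(u, v) \<in> part_rel g c" and uv': "(u', v') \<in> part_rel g c" for a b c u v u' v'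
  proof (cases a; cases b)
    fix \<alpha> \<beta> assume "a = Some \<alpha>" "b = Some \<beta>"
    moreover have "card (summands g \<alpha> \<beta> (u - v)) = card (summands g \<alpha> \<beta> (u' - v'))"
      using uv uv' card_summands by (cases c) (auto simp: part_rel_def)
    ultimately show ?thesis
      by (simp add: card_part_rel_paths_Some)
  qed (simp_all add: card_part_rel_paths_None[OF uv] card_part_rel_paths_None[OF uv'])
  then have "\<exists>k. \<forall>u v. (u, v) \<in> part_rel g c \<longrightarrow> ?paths a b u v = k" for a b c
    by (cases "part_rel g c = {}") (blast, fast)
  moreover have "sym (part_rel g a)" for a
    using uminus[of "_ - _"] by (cases a) (auto simp: part_rel_def sym_def)
  ultimately show ?thesis
    unfolding induces_assoc_scheme_def by blast
qed

section \<open>Partitions into lines of a quadratic extension\<close>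

locale quadratic_subfield =
  fixes F :: "'a::{field,finite} set"
  assumes zero_mem: "0 \<in> F" and one_mem: "1 \<in> F"
    and diff_mem: "\<And>x y. x \<in> F \<Longrightarrow> y \<in> F \<Longrightarrow> x - y \<in> F"
    and mult_mem: "\<And>x y. x \<in> F \<Longrightarrow> y \<in> F \<Longrightarrow> x * y \<in> F"
    and inverse_mem: "\<And>x. x \<in> F \<Longrightarrow> inverse x \<in> F"
    and card_square: "card F * card F = card (UNIV :: 'a set)"
begin

definition line :: "'a \<Rightarrow> 'a set" where
  "line x = (\<lambda>t. t * x) ` F"

lemma mem_line_iff: "y \<in> line x \<longleftrightarrow> (\<exists>t\<in>F. y = t * x)"
  unfolding line_def by auto

lemma card_line: "x \<noteq> 0 \<Longrightarrow> card (line x) = card F"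
  unfolding line_def by (rule card_image) (auto simp: inj_on_def)

lemma zero_mem_line: "0 \<in> line x"
  using zero_mem by (auto simp: mem_line_iff)

lemma self_mem_line: "x \<in> line x"
  using one_mem by (force simp: mem_line_iff)

lemma card_line_minus_zero: "x \<noteq> 0 \<Longrightarrow> card (line x - {0}) = card F - 1"
  using card_line zero_mem_line by (simp add: card_Diff_subset)

lemma mem_line_sym: "y \<in> line x \<Longrightarrow> y \<noteq> 0 \<Longrightarrow> x \<in> line y"
  unfolding mem_line_iff by (metis inverse_mem mult.assoc mult_zero_left left_inverse mult_1)

lemma line_trans: "y \<in> line x \<Longrightarrow> z \<in> line y \<Longrightarrow> z \<in> line x"
  unfolding mem_line_iff by (metis mult_mem mult.assoc)

lemma line_diff_mem: "y \<in> line x \<Longrightarrow> z \<in> line x \<Longrightarrow> y - z \<in> line x"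
  unfolding mem_line_iff by (metis diff_mem left_diff_distrib)

lemma line_add_mem: "y \<in> line x \<Longrightarrow> z \<in> line x \<Longrightarrow> y + z \<in> line x"
  using line_diff_mem[of y x "- z"] line_diff_mem[OF zero_mem_line, of z] by simp

lemma line_scale_mem_iff: "t \<in> F \<Longrightarrow> t \<noteq> 0 \<Longrightarrow> t * y \<in> line x \<longleftrightarrow> y \<in> line x"
  unfolding mem_line_iff
  by (metis inverse_mem mult_mem mult.assoc left_inverse mult_1)

lemma coeffs_unique:
  assumes "x \<noteq> 0" "y \<notin> line x" "a \<in> F" "b \<in> F" "a' \<in> F" "b' \<in> F"
    and "a * x + b * y = a' * x + b' * y"
  shows "a = a' \<and> b = b'"
proof -
  have "b = b'"
  proof (rule ccontr)
    assume "b \<noteq> b'"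
    have "(b - b') * y = (a' - a) * x"
      using assms(7) by (simp add: algebra_simps)
    then have "y = ((a' - a) / (b - b')) * x"
      using \<open>b \<noteq> b'\<close> by (simp add: field_simps)
    moreover have "(a' - a) / (b - b') \<in> F"
      using assms by (simp add: divide_inverse diff_mem mult_mem inverse_mem)
    ultimately show False
      using assms(2) by (auto simp: mem_line_iff)
  qed
  then show ?thesis
    using assms by auto
qed

text \<open>The \<open>|F|\<^sup>2\<close> combinations are pairwise distinct, so they exhaust the field.\<close>
lemma span_two:
  assumes "x \<noteq> 0" "y \<notin> line x"
  obtains a b where "a \<in> F" "b \<in> F" "z = a * x + b * y"
proof -
  let ?h = "\<lambda>(a, b). a * x + b * y"
  have "inj_on ?h (F \<times> F)"
    using coeffs_unique[OF assms] by (auto simp: inj_on_def)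
  then have "card (?h ` (F \<times> F)) = card (UNIV :: 'a set)"
    by (simp add: card_image card_cartesian_product card_square)
  then have "?h ` (F \<times> F) = UNIV"
    by (intro card_subset_eq) auto
  then have "z \<in> ?h ` (F \<times> F)"
    by simp
  then show ?thesis
    using that by auto
qed

lemma card_ge_2: "card F \<ge> 2"
proof -
  have "2 \<le> card F * card F"
    using card_square card_mono[of UNIV "{0::'a, 1}"] by simp
  show ?thesis
  proof (rule ccontr)
    assume "\<not> card F \<ge> 2"
    then have "card F * card F \<le> 1 * 1"
      by (intro mult_le_mono) auto
    then show False
      using \<open>2 \<le> card F * card F\<close> by simp
  qed
qed

end

locale scale_invariant_partition = quadratic_subfield F for F :: "'a::{field,finite} set" +
  fixes g :: "'a \<Rightarrow> 'b"
  assumes scale_invariant: "\<And>t x. t \<in> F \<Longrightarrow> t \<noteq> 0 \<Longrightarrow> g (t * x) = g x"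
begin

lemma value_eq_if_mem_line: "y \<in> line x \<Longrightarrow> y \<noteq> 0 \<Longrightarrow> g y = g x"
  unfolding mem_line_iff using scale_invariant by fastforce

lemma uminus_invariant: "g (- x) = g x"
  using scale_invariant[of "- 1" x] diff_mem[OF zero_mem one_mem] by simp

definition fiber :: "'b \<Rightarrow> 'a set" where
  "fiber z = {x. x \<noteq> 0 \<and> g x = z}"

definition noncollinear_pairs :: "'b \<Rightarrow> 'b \<Rightarrow> 'a \<Rightarrow> ('a \<times> 'a) set" where
  "noncollinear_pairs a b u = {(x, y). x \<in> fiber b - line u \<and> y \<in> fiber a - line u \<and> y \<notin> line x}"

lemma summands_Int_line:
  assumes "u \<noteq> 0"
  shows "summands g a b u \<inter> line u = (if g u = a \<and> g u = b then line u - {0, u} else {})"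
  using assms value_eq_if_mem_line line_diff_mem[OF self_mem_line]
  unfolding summands_def by (auto; metis right_minus_eq)

lemma card_summands_Int_line:
  assumes "u \<noteq> 0"
  shows "card (summands g a b u \<inter> line u) = (if g u = a \<and> g u = b then card F - 2 else 0)"
proof -
  have "card (line u - {0, u}) = card F - 2"
    using card_line[OF assms] zero_mem_line self_mem_line assms by (subst card_Diff_subset) auto
  then show ?thesis
    using summands_Int_line[OF assms, of a b] by (cases "g u = a \<and> g u = b") auto
qed

lemma scaled_summands_mem_noncollinear_pairs:
  assumes "u \<noteq> 0" "w \<in> summands g a b u - line u" "l \<in> F - {0}" "m \<in> F - {0}"
  shows "(l * w, m * (u - w)) \<in> noncollinear_pairs a b u"
proof -
  have w: "w \<noteq> 0" "u - w \<noteq> 0" "g (u - w) = a" "g w = b" "w \<notin> line u"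
    using assms(2) unfolding summands_def by auto
  have "u - w \<notin> line u"
    using w(5) line_diff_mem[OF self_mem_line] by force
  moreover have "u - w \<notin> line w"
    using w(5) line_add_mem[OF _ self_mem_line, of "u - w" w] mem_line_sym[of u w] assms(1)
    by auto
  have "l * w \<in> fiber b - line u"
    using w assms(3) scale_invariant line_scale_mem_iff unfolding fiber_def by auto
  moreover have "m * (u - w) \<in> fiber a - line u"
    using w assms(4) \<open>u - w \<notin> line u\<close> scale_invariant line_scale_mem_iff
    unfolding fiber_def by auto
  moreover have "m * (u - w) \<notin> line (l * w)"
  proof
    assume "m * (u - w) \<in> line (l * w)"
    then have "u - w \<in> line (l * w)"
      using line_scale_mem_iff assms(4) by blast
    moreover have "l * w \<in> line w"
      using assms(3) by (auto simp: mem_line_iff)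
    ultimately show False
      using line_trans \<open>u - w \<notin> line w\<close> by blast
  qed
  ultimately show ?thesis
    unfolding noncollinear_pairs_def by simp
qed

lemma scaled_summands_eqD:
  assumes "u \<noteq> 0"
    and w: "w \<in> summands g a b u" "w \<notin> line u" "l \<in> F" "l \<noteq> 0" "m \<in> F" "m \<noteq> 0"
    and w': "w' \<in> summands g a b u" "w' \<notin> line u" "l' \<in> F" "l' \<noteq> 0" "m' \<in> F" "m' \<noteq> 0"
    and eq: "l * w = l' * w'" "m * (u - w) = m' * (u - w')"
  shows "w = w' \<and> l = l' \<and> m = m'"
proof -
  have "(l * w, m * (u - w)) \<in> noncollinear_pairs a b u"
    using scaled_summands_mem_noncollinear_pairs assms w by simp
  then have x: "l * w \<noteq> 0" and y: "m * (u - w) \<notin> line (l * w)"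
    unfolding noncollinear_pairs_def fiber_def by auto
  have "inverse l * (l * w) + inverse m * (m * (u - w)) = u"
    using w by (simp add: field_simps)
  moreover have "inverse l' * (l * w) + inverse m' * (m * (u - w)) = u"
    using w' by (simp add: eq field_simps)
  ultimately have "inverse l = inverse l' \<and> inverse m = inverse m'"
    using coeffs_unique[OF x y] w w' inverse_mem by metis
  then show ?thesis
    using eq w by auto
qed

lemma noncollinear_pair_mem_scaled_summands:
  assumes u: "u \<noteq> 0" and xy: "(x, y) \<in> noncollinear_pairs a b u"
  shows "(x, y) \<in> (\<lambda>(w, l, m). (l * w, m * (u - w))) ` ((summands g a b u - line u) \<times> (F - {0}) \<times> (F - {0}))"
proof -
  have x: "x \<noteq> 0" "g x = b" "x \<notin> line u" and y: "y \<noteq> 0" "g y = a" "y \<notin> line u" "y \<notin> line x"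
    using xy unfolding noncollinear_pairs_def fiber_def by auto
  obtain \<alpha> \<beta> where \<alpha>\<beta>: "\<alpha> \<in> F" "\<beta> \<in> F" "u = \<alpha> * x + \<beta> * y"
    using span_two[OF x(1) y(4)] by blast
  have "\<alpha> \<noteq> 0"
    using \<alpha>\<beta> u y(3) mem_line_sym[of u y] by (auto simp: mem_line_iff)
  have "\<beta> \<noteq> 0"
    using \<alpha>\<beta> u x(3) mem_line_sym[of u x] by (auto simp: mem_line_iff)
  define w where "w = \<alpha> * x"
  have "u - w = \<beta> * y"
    using \<alpha>\<beta> unfolding w_def by simp
  then have "w \<in> summands g a b u"
    using x y \<alpha>\<beta> \<open>\<alpha> \<noteq> 0\<close> \<open>\<beta> \<noteq> 0\<close> scale_invariant unfolding summands_def w_def by auto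
  moreover have "w \<notin> line u"
    using x(3) \<alpha>\<beta>(1) \<open>\<alpha> \<noteq> 0\<close> line_scale_mem_iff unfolding w_def by blast
  moreover have "(x, y) = (inverse \<alpha> * w, inverse \<beta> * (u - w))"
    using \<open>u - w = \<beta> * y\<close> \<open>\<alpha> \<noteq> 0\<close> \<open>\<beta> \<noteq> 0\<close> unfolding w_def by simp
  ultimately show ?thesis
    using \<alpha>\<beta> \<open>\<alpha> \<noteq> 0\<close> \<open>\<beta> \<noteq> 0\<close> inverse_mem by force
qed

lemma bij_betw_scaled_summands:
  assumes "u \<noteq> 0"
  shows "bij_betw (\<lambda>(w, l, m). (l * w, m * (u - w)))
           ((summands g a b u - line u) \<times> (F - {0}) \<times> (F - {0})) (noncollinear_pairs a b u)"
    (is "bij_betw ?\<phi> ?S _")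
proof (unfold bij_betw_def, intro conjI)
  show "inj_on ?\<phi> ?S"
  proof (rule inj_onI)
    fix s t assume "s \<in> ?S" "t \<in> ?S" "?\<phi> s = ?\<phi> t"
    moreover obtain w l m w' l' m' where "s = (w, l, m)" "t = (w', l', m')"
      by (cases s, cases t) blast
    ultimately show "s = t"
      using scaled_summands_eqD[OF assms, where w = w and l = l and m = m and w' = w' and l' = l' and m' = m']
      by auto
  qed
  show "?\<phi> ` ?S = noncollinear_pairs a b u"
  proof
    show "?\<phi> ` ?S \<subseteq> noncollinear_pairs a b u"
      by (auto intro!: scaled_summands_mem_noncollinear_pairs[OF assms])
    show "noncollinear_pairs a b u \<subseteq> ?\<phi> ` ?S"
    proof
      fix xy assume "xy \<in> noncollinear_pairs a b u"
      moreover obtain x y where "xy = (x, y)"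
        by (cases xy) blast
      ultimately show "xy \<in> ?\<phi> ` ?S"
        using noncollinear_pair_mem_scaled_summands[OF assms, of x y] by blast
    qed
  qed
qed

lemma card_fiber_minus_line:
  assumes "u \<noteq> 0"
  shows "card (fiber z - line u) = card (fiber z) - (if g u = z then card F - 1 else 0)"
proof -
  have "fiber z \<inter> line u = (if g u = z then line u - {0} else {})"
    unfolding fiber_def using assms value_eq_if_mem_line self_mem_line by auto
  then show ?thesis
    using card_line_minus_zero[OF assms] by (simp add: card_Diff_subset_Int)
qed

lemma fiber_minus_line_Int_line:
  assumes "u \<noteq> 0" and x: "x \<in> fiber b - line u"
  shows "(fiber a - line u) \<inter> line x = (if a = b then line x - {0} else {})"
proof -
  have "y \<notin> line u" if "y \<in> line x" "y \<noteq> 0" for y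
    using x that line_trans mem_line_sym by blast
  then show ?thesis
    using x value_eq_if_mem_line unfolding fiber_def by auto
qed

lemma card_noncollinear_pairs:
  assumes u: "u \<noteq> 0"
  shows "card (noncollinear_pairs a b u)
       = card (fiber b - line u) * (card (fiber a - line u) - (if a = b then card F - 1 else 0))"
proof -
  have "noncollinear_pairs a b u = Sigma (fiber b - line u) (\<lambda>x. (fiber a - line u) - line x)"
    unfolding noncollinear_pairs_def by auto
  then have "card (noncollinear_pairs a b u) = (\<Sum>x\<in>fiber b - line u. card ((fiber a - line u) - line x))"
    by simp
  also have "\<dots> = (\<Sum>x\<in>fiber b - line u. card (fiber a - line u) - (if a = b then card F - 1 else 0))"
  proof (rule sum.cong)
    fix x assume x: "x \<in> fiber b - line u"
    then have "x \<noteq> 0"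
      unfolding fiber_def by auto
    then show "card ((fiber a - line u) - line x) = card (fiber a - line u) - (if a = b then card F - 1 else 0)"
      using fiber_minus_line_Int_line[OF u x, of a] card_line_minus_zero
      by (simp add: card_Diff_subset_Int)
  qed simp
  finally show ?thesis
    by simp
qed

lemma card_summands_eq:
  assumes u: "u \<noteq> 0" and v: "v \<noteq> 0" and "g u = g v"
  shows "card (summands g a b u) = card (summands g a b v)"
proof -
  have split: "card (summands g a b x) = card (summands g a b x \<inter> line x) + card (summands g a b x - line x)" for x
    by (metis card_Int_Diff finite)
  have off_line: "card (summands g a b x - line x) * ((card F - 1) * (card F - 1))
     = card (fiber b - line x) * (card (fiber a - line x) - (if a = b then card F - 1 else 0))"
    if "x \<noteq> 0" for x
    using bij_betw_same_card[OF bij_betw_scaled_summands[OF that]] card_noncollinear_pairs[OF that]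
    by (simp add: card_cartesian_product card_Diff_subset zero_mem)
  have "card (summands g a b u - line u) * ((card F - 1) * (card F - 1))
      = card (summands g a b v - line v) * ((card F - 1) * (card F - 1))"
  proof -
    have "card (fiber z - line u) = card (fiber z - line v)" for z
      using card_fiber_minus_line[OF u] card_fiber_minus_line[OF v] \<open>g u = g v\<close> by simp
    then show ?thesis
      by (simp only: off_line[OF u] off_line[OF v])
  qed
  moreover have "(card F - 1) * (card F - 1) > 0"
    using card_ge_2 by simp
  ultimately have "card (summands g a b u - line u) = card (summands g a b v - line v)"
    by simp
  then show ?thesis
    using split[of u] split[of v] card_summands_Int_line[OF u] card_summands_Int_line[OF v] \<open>g u = g v\<close>
    by simp
qed

theorem induces_assoc_scheme_iff: "induces_assoc_scheme g d \<longleftrightarrow> d = card (g ` (UNIV - {0}))"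
  using induces_assoc_scheme_if_card_summands_invariant uminus_invariant card_summands_eq by blast

end

lemma quadratic_subfield_fixed_points:
  assumes "Q = CHAR('a::{field,finite}) ^ s" "card (UNIV :: 'a set) = Q * Q"
  shows "quadratic_subfield {x::'a. x ^ Q = x}"
proof
  have "2 \<le> Q * Q"
    using assms(2) card_mono[of UNIV "{0::'a, 1}"] by simp
  then have "Q > 1"
    by (cases "Q = 0 \<or> Q = 1") auto
  have mem_iff: "x ^ Q = x \<longleftrightarrow> x = 0 \<or> x ^ (Q - 1) = 1" for x :: 'a
    using \<open>Q > 1\<close> power_Suc[of x "Q - 1"] by (cases "x = 0") auto
  have "Q - 1 dvd card (UNIV :: 'a set) - 1"
    using assms(2) \<open>Q > 1\<close> by (cases Q) (auto simp: algebra_simps)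
  then have "card {x::'a. x ^ (Q - 1) = 1} = Q - 1"
    using \<open>Q > 1\<close> by (intro card_roots_of_unity) auto
  moreover have "{x::'a. x ^ Q = x} = insert 0 {x. x ^ (Q - 1) = 1}"
    using mem_iff by auto
  moreover have "(0::'a) \<notin> {x. x ^ (Q - 1) = 1}"
    using \<open>Q > 1\<close> by (simp add: power_0_left)
  ultimately have "card {x::'a. x ^ Q = x} = Q"
    using \<open>Q > 1\<close> by simp
  then show "card {x::'a. x ^ Q = x} * card {x::'a. x ^ Q = x} = card (UNIV :: 'a set)"
    using assms(2) by simp
  show "x - y \<in> {x. x ^ Q = x}" if "x \<in> {x. x ^ Q = x}" "y \<in> {x. x ^ Q = x}" for x y :: 'a
    using that freshmans_dream'[OF prime_CHAR_finite_field assms(1), of "x - y" y]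
    by (simp add: eq_diff_eq)
  show "0 \<in> {x::'a. x ^ Q = x}"
    using \<open>Q > 1\<close> by simp
qed (auto simp: power_mult_distrib power_inverse)

section \<open>Traces of roots of unity\<close>

lemma sum_power_roots_of_unity:
  fixes z :: "'a::field"
  assumes "z ^ M = 1"
  shows "(\<Sum>t\<in>{0<..M}. z ^ t) = (if z = 1 then of_nat M else 0)"
proof -
  have "(\<Sum>t\<in>{0<..M}. z ^ t) = (\<Sum>t<M. z ^ Suc t)"
    by (rule sum.reindex_bij_witness[of _ Suc "\<lambda>t. t - 1"]) auto
  also have "\<dots> = z * (\<Sum>t<M. z ^ t)"
    by (simp add: sum_distrib_left)
  finally show ?thesis
    using assms by (simp add: sum_gp_strict)
qed

lemma sum_power_primroot_powers:
  fixes z :: "'a::field"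
  assumes "N > 1" "residue_primroot N p" "z ^ N = 1"
  shows "(\<Sum>j<totient N. z ^ (p ^ j)) = (\<Sum>t\<in>totatives N. z ^ t)"
proof -
  have "z ^ k = z ^ (k mod N)" for k
  proof -
    have "z ^ k = (z ^ N) ^ (k div N) * z ^ (k mod N)"
      by (simp flip: power_add power_mult)
    then show ?thesis
      using assms(3) by simp
  qed
  then have "(\<Sum>j<totient N. z ^ (p ^ j)) = (\<Sum>j<totient N. z ^ (p ^ j mod N))"
    by simp
  also have "\<dots> = (\<Sum>t\<in>totatives N. z ^ t)"
    using residue_primroot_is_generator[OF assms(1,2)] by (rule sum.reindex_bij_betw)
  finally show ?thesis .
qed

lemma sum_power_totatives_prime_power:
  fixes z :: "'a::field"
  assumes "prime r" "m > 0" "z ^ (r ^ m) = 1"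
  shows "(\<Sum>t\<in>totatives (r ^ m). z ^ t)
       = (if z = 1 then of_nat (r ^ m) else 0) - (if z ^ r = 1 then of_nat (r ^ (m - 1)) else 0)"
proof -
  have rm: "r ^ m = r * r ^ (m - 1)"
    using assms(2) by (simp flip: power_Suc)
  have "totatives (r ^ m) = {0<..r ^ m} - (\<lambda>k. r * k) ` {0<..r ^ (m - 1)}"
    using totatives_prime_power_Suc[OF assms(1), of "m - 1"] assms(2) by simp
  moreover have "(\<lambda>k. r * k) ` {0<..r ^ (m - 1)} \<subseteq> {0<..r ^ m}"
    using rm prime_gt_0_nat[OF assms(1)] by auto
  moreover have "(\<Sum>t\<in>(\<lambda>k. r * k) ` {0<..r ^ (m - 1)}. z ^ t) = (\<Sum>k\<in>{0<..r ^ (m - 1)}. (z ^ r) ^ k)"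
    using prime_gt_0_nat[OF assms(1)] by (subst sum.reindex) (auto simp: inj_on_def power_mult)
  moreover have "(z ^ r) ^ r ^ (m - 1) = 1"
    using assms(3) rm by (simp flip: power_mult)
  ultimately show ?thesis
    using assms(3) by (simp add: sum_diff sum_power_roots_of_unity)
qed

section \<open>The partition induced by the trace\<close>

locale trace_setting =
  fixes m r p :: nat and f :: "'a::{field,finite} \<Rightarrow> 'a"
  assumes m_pos: "m > 0" and prime_r: "prime r" and odd_r: "odd r" and prime_p: "prime p"
    and primroot: "residue_primroot (r ^ m) p"
    and card_UNIV_eq: "card (UNIV :: 'a set) = p ^ totient (r ^ m)"
    and f_eq: "\<And>x. f x = field_trace p (totient (r ^ m)) (x ^ ((card (UNIV :: 'a set) - 1) div r ^ m))"
begin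

abbreviation Q :: nat where
  "Q \<equiv> p ^ (totient (r ^ m) div 2)"

lemma r_power_gt_2: "r ^ m > 2"
  using prime_r odd_r m_pos by (rule odd_prime_power_gt_2)

lemma CHAR_eq: "CHAR('a) = p"
  using CHAR_eq_if_card_UNIV_eq_prime_power[OF prime_p card_UNIV_eq] .

lemma card_UNIV_eq_square: "card (UNIV :: 'a set) = Q * Q"
proof -
  have "even (totient (r ^ m))"
    using totient_even r_power_gt_2 by blast
  then show ?thesis
    by (metis card_UNIV_eq dvd_mult_div_cancel mult_2 power_add)
qed

lemma card_minus_one_div_eq:
  "r ^ m dvd card (UNIV :: 'a set) - 1"
  "(card (UNIV :: 'a set) - 1) div r ^ m = (Q - 1) * ((Q + 1) div r ^ m)"
proof -
  obtain c where c: "Q + 1 = r ^ m * c"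
    using primroot_prime_power_half_totient[OF prime_r odd_r m_pos primroot] by blast
  have "card (UNIV :: 'a set) - 1 = (Q - 1) * (Q + 1)"
    unfolding card_UNIV_eq_square by (cases Q) (simp_all add: algebra_simps)
  then have "card (UNIV :: 'a set) - 1 = r ^ m * ((Q - 1) * c)"
    unfolding c by (simp add: ac_simps)
  then show "r ^ m dvd card (UNIV :: 'a set) - 1"
    "(card (UNIV :: 'a set) - 1) div r ^ m = (Q - 1) * ((Q + 1) div r ^ m)"
    using r_power_gt_2 c by simp_all
qed

lemma f_scale_invariant:
  assumes "t ^ Q = t" "t \<noteq> 0"
  shows "f (t * x) = f x"
proof -
  have "t ^ (Q - 1) = 1"
    using assms power_Suc[of t "Q - 1"] by (cases Q) auto
  then show ?thesis
    unfolding f_eq card_minus_one_div_eq(2) by (simp add: power_mult_distrib power_mult)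
qed

sublocale scale_invariant_partition "{x. x ^ Q = x}" f
proof (rule scale_invariant_partition.intro)
  show "quadratic_subfield {x::'a. x ^ Q = x}"
    using quadratic_subfield_fixed_points CHAR_eq card_UNIV_eq_square by blast
  show "scale_invariant_partition_axioms {x. x ^ Q = x} f"
    by unfold_locales (simp add: f_scale_invariant)
qed

lemma r_power_eq_totient_add: "r ^ m = totient (r ^ m) + r ^ (m - 1)"
  using totient_prime_power[OF prime_r m_pos] prime_gt_0_nat[OF prime_r] m_pos
  by (cases r; cases m) (simp_all add: algebra_simps)

lemma trace_root_of_unity:
  fixes z :: 'a
  assumes "z ^ r ^ m = 1"
  shows "field_trace p (totient (r ^ m)) z
       = (if z = 1 then of_nat (totient (r ^ m)) else if z ^ r = 1 then - of_nat (r ^ (m - 1)) else 0)"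
proof -
  have "field_trace p (totient (r ^ m)) z
      = (if z = 1 then of_nat (r ^ m) else 0) - (if z ^ r = 1 then of_nat (r ^ (m - 1)) else 0)"
    using sum_power_primroot_powers[OF _ primroot assms] sum_power_totatives_prime_power[OF prime_r m_pos assms]
      r_power_gt_2 unfolding field_trace_def by simp
  moreover have "(of_nat (r ^ m) :: 'a) = of_nat (totient (r ^ m)) + of_nat (r ^ (m - 1))"
    using r_power_eq_totient_add by (metis of_nat_add)
  ultimately show ?thesis
    by auto
qed

lemma image_f_eq: "f ` (UNIV - {0}) = field_trace p (totient (r ^ m)) ` {z. z ^ r ^ m = 1}"
proof -
  have "f ` (UNIV - {0})
      = field_trace p (totient (r ^ m)) ` (\<lambda>x. x ^ ((card (UNIV :: 'a set) - 1) div r ^ m)) ` (UNIV - {0})"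
    unfolding image_image by (rule image_cong) (simp_all add: f_eq)
  also have "(\<lambda>x::'a. x ^ ((card (UNIV :: 'a set) - 1) div r ^ m)) ` (UNIV - {0}) = {z. z ^ r ^ m = 1}"
    using card_minus_one_div_eq(1) prime_gt_0_nat[OF prime_r] by (intro power_image_eq_roots_of_unity) auto
  finally show ?thesis .
qed

lemma root_of_unity_r_imp_r_power: "(z::'a) ^ r = 1 \<Longrightarrow> z ^ r ^ m = 1"
  using m_pos power_mult[of z r "r ^ (m - 1)"] by (simp flip: power_Suc)

lemma exists_nontrivial_roots_of_unity:
  shows "\<exists>z::'a. z ^ r = 1 \<and> z \<noteq> 1"
    and "m > 1 \<Longrightarrow> \<exists>z::'a. z ^ r ^ m = 1 \<and> z ^ r \<noteq> 1"
proof -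
  have "r dvd card (UNIV :: 'a set) - 1"
    using dvd_trans[OF dvd_power[of m r] card_minus_one_div_eq(1)] m_pos by simp
  then have card_r: "card {z::'a. z ^ r = 1} = r"
    using prime_gt_0_nat[OF prime_r] by (intro card_roots_of_unity) auto
  show "\<exists>z::'a. z ^ r = 1 \<and> z \<noteq> 1"
  proof (rule ccontr)
    assume "\<nexists>z::'a. z ^ r = 1 \<and> z \<noteq> 1"
    then have "card {z::'a. z ^ r = 1} \<le> card {1::'a}"
      by (intro card_mono) auto
    then show False
      using card_r prime_gt_1_nat[OF prime_r] by simp
  qed
  assume "m > 1"
  have card_r_power: "card {z::'a. z ^ r ^ m = 1} = r ^ m"
    using card_minus_one_div_eq(1) prime_gt_0_nat[OF prime_r] by (intro card_roots_of_unity) auto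
  have "r < r ^ m"
    using power_strict_increasing[of 1 m r] \<open>m > 1\<close> prime_gt_1_nat[OF prime_r] by simp
  show "\<exists>z::'a. z ^ r ^ m = 1 \<and> z ^ r \<noteq> 1"
  proof (rule ccontr)
    assume "\<nexists>z::'a. z ^ r ^ m = 1 \<and> z ^ r \<noteq> 1"
    then have "card {z::'a. z ^ r ^ m = 1} \<le> card {z::'a. z ^ r = 1}"
      by (intro card_mono) auto
    then show False
      using card_r card_r_power \<open>r < r ^ m\<close> by simp
  qed
qed

lemma value_set:
  "f ` (UNIV - {0}) = {of_nat (totient (r ^ m)), - of_nat (r ^ (m - 1))} \<union> (if m > 1 then {0} else {})"
  (is "_ = ?V")
proof
  show "f ` (UNIV - {0}) \<subseteq> ?V"
  proof (unfold image_f_eq, rule image_subsetI)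
    fix z :: 'a assume z: "z \<in> {z. z ^ r ^ m = 1}"
    have "z ^ r = 1" if "m \<le> 1"
      using z that m_pos by (simp add: le_Suc_eq)
    then show "field_trace p (totient (r ^ m)) z \<in> ?V"
      using z trace_root_of_unity[of z] by auto
  qed
  obtain z1 :: 'a where z1: "z1 ^ r = 1" "z1 \<noteq> 1"
    using exists_nontrivial_roots_of_unity(1) by blast
  have "of_nat (totient (r ^ m)) \<in> f ` (UNIV - {0})"
    unfolding image_f_eq using trace_root_of_unity[of 1] by (intro image_eqI[of _ _ 1]) auto
  moreover have "- of_nat (r ^ (m - 1)) \<in> f ` (UNIV - {0})"
    unfolding image_f_eq using z1 root_of_unity_r_imp_r_power trace_root_of_unity[of z1]
    by (intro image_eqI[of _ _ z1]) auto
  moreover have "0 \<in> f ` (UNIV - {0})" if m: "m > 1"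
  proof -
    obtain z2 :: 'a where "z2 ^ r ^ m = 1" "z2 ^ r \<noteq> 1"
      using exists_nontrivial_roots_of_unity(2)[OF m] by blast
    then show ?thesis
      unfolding image_f_eq using trace_root_of_unity[of z2] by (intro image_eqI[of _ _ z2]) auto
  qed
  ultimately show "?V \<subseteq> f ` (UNIV - {0})"
    by auto
qed

lemma of_nat_eq_0_iff_dvd: "of_nat k = (0::'a) \<longleftrightarrow> p dvd k"
  using of_nat_eq_0_iff_char_dvd[where 'a = 'a] CHAR_eq by simp

lemma not_dvd_r: "\<not> p dvd r"
proof
  assume "p dvd r"
  then have "p dvd r ^ m"
    using dvd_trans[OF _ dvd_power[of m r]] m_pos by blast
  moreover have "coprime (r ^ m) p"
    using primroot by (simp add: residue_primroot_def)
  ultimately have "is_unit p"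
    by (blast intro: coprime_common_divisor[OF _ _ dvd_refl])
  then show False
    using prime_p by simp
qed

lemma card_value_set: "card (f ` (UNIV - {0})) = (if m > 1 \<and> \<not> [r = 1] (mod p) then 3 else 2)"
proof -
  define A where "A = (of_nat (totient (r ^ m)) :: 'a)"
  define B where "B = - (of_nat (r ^ (m - 1)) :: 'a)"
  have not_dvd: "\<not> p dvd r ^ (m - 1)" "\<not> p dvd r ^ m"
    using not_dvd_r prime_dvd_power[OF prime_p] by blast+
  have "A + of_nat (r ^ (m - 1)) \<noteq> 0"
    using not_dvd(2) of_nat_eq_0_iff_dvd[of "r ^ m"] r_power_eq_totient_add
    unfolding A_def by (metis of_nat_add)
  then have "A \<noteq> B"
    unfolding B_def by (simp add: eq_neg_iff_add_eq_0)
  moreover have "B \<noteq> 0"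
    unfolding B_def neg_equal_0_iff_equal of_nat_eq_0_iff_dvd by (rule not_dvd(1))
  moreover have "A = 0 \<longleftrightarrow> [r = 1] (mod p)"
  proof -
    have "A = 0 \<longleftrightarrow> p dvd r ^ (m - 1) * (r - 1)"
      unfolding A_def of_nat_eq_0_iff_dvd totient_prime_power[OF prime_r m_pos] ..
    also have "\<dots> \<longleftrightarrow> p dvd r - 1"
      using prime_dvd_mult_iff[OF prime_p] not_dvd(1) by blast
    also have "\<dots> \<longleftrightarrow> [r = 1] (mod p)"
      using cong_altdef_nat[of 1 r p] prime_gt_1_nat[OF prime_r] by simp
    finally show ?thesis .
  qed
  ultimately show ?thesis
    unfolding value_set A_def[symmetric] B_def[symmetric] by (auto simp: card_insert_if)
qed

end

theorem proposition4p6: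
  fixes m r p :: nat
    and f :: "'a::{field,finite} \<Rightarrow> 'a"
  assumes "m > 0" and "prime r" and "odd r"
    and "prime p" and "p \<ge> 3"
    and "residue_primroot (r ^ m) p"
    and "card (UNIV :: 'a set) = p ^ totient (r ^ m)"
    and "\<And>x. f x = field_trace p (totient (r ^ m)) (x ^ ((card (UNIV :: 'a set) - 1) div r ^ m))"
  shows "(induces_assoc_scheme f 2 \<longleftrightarrow> card (f ` (UNIV - {0})) = 2) \<and>
         (card (f ` (UNIV - {0})) = 2 \<longleftrightarrow> m = 1 \<or> [r = 1] (mod p)) \<and>
         (induces_assoc_scheme f 3 \<longleftrightarrow> card (f ` (UNIV - {0})) = 3) \<and>
         (card (f ` (UNIV - {0})) = 3 \<longleftrightarrow> m > 1 \<and> \<not> [r = 1] (mod p))"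
proof -
  interpret trace_setting m r p f
    by (rule trace_setting.intro) (fact assms)+
  show ?thesis
    using induces_assoc_scheme_iff card_value_set m_pos by auto
qed

end
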